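(* Let $\mathcal X$ be a countable set with the discrete topology. For every $P\in\Delta^*_{BD}$ and every path $\omega\in\Omega$, $\lim_{t\to\infty}P(\omega^t\mid\Omega)=0$.
   Context: $\Omega=\mathcal X^{\mathbb N}$ with the product topology; $\omega^t$ is the cylinder of paths agreeing with $\omega$ in the first $t$ coordinates ($\omega^0=\Omega$); $\mathcal H$ is the set of cylinders. $\Sigma$ is a $\sigma$-algebra containing all open sets; $\mathbb P$ the set of finitely additive probabilities on $(\Omega,\Sigma)$; $P\in\mathbb P$ is strongly nonatomic if for every $E\in\Sigma$, $\alpha\in[0,1]$ there is $F\in\Sigma$, $F\subseteq E$, with $P(F)=\alpha P(E)$. A conditional probability is a function $P:\Sigma\times\mathcal H\to[0,1]$ such that for every $t\ge0$, $\omega$: (1) $P(\cdot\mid\omega^t)\in\mathbb P$; (2) $P(\omega^t\mid\omega^t)=1$; (3) $P(E\cap\omega^{t+n}\mid\omega^t)=P(E\mid\omega^{t+n})P(\omega^{t+n}\mid\omega^t)$ for all $E$, $n\ge0$. It is a conditional opinion if $P(\cdot\mid\Omega)$ is strongly nonatomic. For conditional probabilities $P,Q$, $P$ merges with $Q$ if for every $\varepsilon>0$, $\lim_{t\to\infty}Q(\{\omega:\sup_{E\in\Sigma}|P(E\mid\omega^t)-Q(E\mid\omega^t)|>\varepsilon\}\mid\Omega)=0$. For $Q,R\in\mathbb P$, $Q\ll R$ means $R(E_n)\to0$ implies $Q(E_n)\to0$ for every sequence in $\Sigma$. A conditional probability $P$ has the Blackwell–Dubins property if for every $Q\in\mathbb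 P$ with $Q\ll P(\cdot\mid\Omega)$ there is a conditional probability $\widetilde Q$ with $\widetilde Q(\cdot\mid\Omega)=Q$ such that $P$ merges with $\widetilde Q$. $\Delta^*_{BD}$ is the set of conditional opinions with the Blackwell–Dubins property. *)

theory Defs
  imports "HOL-Analysis.Analysis"
begin

definition cyl :: "(nat \<Rightarrow> 'x) \<Rightarrow> nat \<Rightarrow> (nat \<Rightarrow> 'x) set" where
  "cyl \<omega> t = {\<omega>'. \<forall>i<t. \<omega>' i = \<omega> i}"

definition path_topology :: "(nat \<Rightarrow> 'x) topology" where
  "path_topology = product_topology (\<lambda>_. discrete_topology (UNIV :: 'x set)) UNIV"

definition admissible_sigma :: "(nat \<Rightarrow> 'x) set set \<Rightarrow> bool" where
  "admissible_sigma \<Sigma> \<longleftrightarrow> sigma_algebra UNIV \<Sigma> \<and> (\<forall>U. openin path_topology U \<longrightarrow> U \<in> \<Sigma>)"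

text \<open>Finitely additive probability on \<open>(\<Omega>,\<Sigma>)\<close> (values outside \<open>\<Sigma>\<close> are irrelevant).\<close>
definition fa_prob :: "'a set set \<Rightarrow> ('a set \<Rightarrow> real) \<Rightarrow> bool" where
  "fa_prob \<Sigma> P \<longleftrightarrow> (\<forall>E\<in>\<Sigma>. 0 \<le> P E \<and> P E \<le> 1) \<and> P UNIV = 1 \<and>
     (\<forall>A\<in>\<Sigma>. \<forall>B\<in>\<Sigma>. A \<inter> B = {} \<longrightarrow> P (A \<union> B) = P A + P B)"

definition strongly_nonatomic :: "'a set set \<Rightarrow> ('a set \<Rightarrow> real) \<Rightarrow> bool" where
  "strongly_nonatomic \<Sigma> P \<longleftrightarrow>
     (\<forall>E\<in>\<Sigma>. \<forall>\<alpha>::real. 0 \<le> \<alpha> \<and> \<alpha> \<le> 1 \<longrightarrow> (\<exists>F\<in>\<Sigma>. F \<subseteq> E \<and> P F = \<alpha> * P E))"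

text \<open>A conditional probability: \<open>P E H\<close> is \<open>P(E | H)\<close> for \<open>E \<in> \<Sigma>\<close> and cylinders \<open>H\<close>.\<close>
definition cond_prob :: "(nat \<Rightarrow> 'x) set set \<Rightarrow> ((nat \<Rightarrow> 'x) set \<Rightarrow> (nat \<Rightarrow> 'x) set \<Rightarrow> real) \<Rightarrow> bool" where
  "cond_prob \<Sigma> P \<longleftrightarrow> (\<forall>t \<omega>.
      fa_prob \<Sigma> (\<lambda>E. P E (cyl \<omega> t)) \<and>
      P (cyl \<omega> t) (cyl \<omega> t) = 1 \<and>
      (\<forall>E\<in>\<Sigma>. \<forall>n. P (E \<inter> cyl \<omega> (t + n)) (cyl \<omega> t)
                   = P E (cyl \<omega> (t + n)) * P (cyl \<omega> (t + n)) (cyl \<omega> t)))"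

definition cond_opinion :: "(nat \<Rightarrow> 'x) set set \<Rightarrow> ((nat \<Rightarrow> 'x) set \<Rightarrow> (nat \<Rightarrow> 'x) set \<Rightarrow> real) \<Rightarrow> bool" where
  "cond_opinion \<Sigma> P \<longleftrightarrow> cond_prob \<Sigma> P \<and> strongly_nonatomic \<Sigma> (\<lambda>E. P E UNIV)"

definition merges :: "(nat \<Rightarrow> 'x) set set \<Rightarrow> ((nat \<Rightarrow> 'x) set \<Rightarrow> (nat \<Rightarrow> 'x) set \<Rightarrow> real)
    \<Rightarrow> ((nat \<Rightarrow> 'x) set \<Rightarrow> (nat \<Rightarrow> 'x) set \<Rightarrow> real) \<Rightarrow> bool" where
  "merges \<Sigma> P Q \<longleftrightarrow> (\<forall>\<epsilon>>0.
     (\<lambda>t. Q {\<omega>. (SUP E\<in>\<Sigma>. \<bar>P E (cyl \<omega> t) - Q E (cyl \<omega> t)\<bar>) > \<epsilon>} UNIV) \<longlonglongrightarrow> 0)"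

definition abs_cont :: "'a set set \<Rightarrow> ('a set \<Rightarrow> real) \<Rightarrow> ('a set \<Rightarrow> real) \<Rightarrow> bool" where
  "abs_cont \<Sigma> Q R \<longleftrightarrow> (\<forall>En :: nat \<Rightarrow> 'a set. (\<forall>n. En n \<in> \<Sigma>) \<longrightarrow>
     (\<lambda>n. R (En n)) \<longlonglongrightarrow> 0 \<longrightarrow> (\<lambda>n. Q (En n)) \<longlonglongrightarrow> 0)"

definition blackwell_dubins :: "(nat \<Rightarrow> 'x) set set \<Rightarrow> ((nat \<Rightarrow> 'x) set \<Rightarrow> (nat \<Rightarrow> 'x) set \<Rightarrow> real) \<Rightarrow> bool" where
  "blackwell_dubins \<Sigma> P \<longleftrightarrow> (\<forall>Q. fa_prob \<Sigma> Q \<and> abs_cont \<Sigma> Q (\<lambda>E. P E UNIV) \<longrightarrow>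
     (\<exists>Qt. cond_prob \<Sigma> Qt \<and> (\<forall>E\<in>\<Sigma>. Qt E UNIV = Q E) \<and> merges \<Sigma> P Qt))"

definition Delta_BD :: "(nat \<Rightarrow> 'x) set set \<Rightarrow> ((nat \<Rightarrow> 'x) set \<Rightarrow> (nat \<Rightarrow> 'x) set \<Rightarrow> real) set" where
  "Delta_BD \<Sigma> = {P. cond_opinion \<Sigma> P \<and> blackwell_dubins \<Sigma> P}"

end

theory Submission
  imports Defs
begin

text \<open>Suppose \<open>P(\<omega>^t | \<Omega>)\<close> decreases to \<open>L > 0\<close>. Then \<open>E \<mapsto> lim\<^sub>t P(E \<inter> \<omega>^t | \<Omega>) / L\<close> is a
  finitely additive prior \<open>Q \<ll> P\<close> with \<open>Q(\<omega>^t) = 1\<close> for every \<open>t\<close>; strong nonatomicity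
  yields a set \<open>G\<close> with \<open>0 < Q(G) < 1\<close>, and conditioning \<open>Q\<close> on \<open>G\<close> gives a second such prior.
  Any conditional extension of a prior giving probability one to all \<open>\<omega>^t\<close> equals that prior
  given \<open>\<omega>^t\<close>, so merging forces \<open>P(\<cdot> | \<omega>^t)\<close> to approach both priors uniformly, and
  they would have to agree on \<open>G\<close>.\<close>

lemma cyl_0 [simp]: "cyl \<omega> 0 = UNIV"
  by (simp add: cyl_def)

lemma cyl_antimono: "t \<le> s \<Longrightarrow> cyl \<omega> s \<subseteq> cyl \<omega> t"
  by (auto simp: cyl_def)

lemma decseq_cyl: "decseq (cyl \<omega>)"
  by (simp add: decseq_def cyl_antimono)

lemma cyl_self: "\<omega> \<in> cyl \<omega> t"
  by (simp add: cyl_def)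

lemma cyl_eq_if_mem: "\<omega>' \<in> cyl \<omega> t \<Longrightarrow> cyl \<omega>' t = cyl \<omega> t"
  by (auto simp: cyl_def)

lemma openin_cyl: "openin path_topology (cyl \<omega> t)"
proof (induction t)
  case 0
  have "topspace path_topology = UNIV"
    by (simp add: path_topology_def)
  then show ?case
    by (metis cyl_0 openin_topspace)
next
  case (Suc t)
  have "openin path_topology {x \<in> topspace path_topology. x t \<in> {\<omega> t}}"
    unfolding path_topology_def
    by (rule openin_continuous_map_preimage[OF continuous_map_product_projection]) auto
  then have "openin path_topology {x. x t = \<omega> t}"
    by (simp add: path_topology_def)
  moreover have "cyl \<omega> (Suc t) = cyl \<omega> t \<inter> {x. x t = \<omega> t}"
    by (auto simp: cyl_def less_Suc_eq)
  ultimately show ?case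
    using Suc by (simp add: openin_Int)
qed

lemma openin_if_cyl_saturated:
  assumes "\<And>a b. a \<in> cyl b t \<Longrightarrow> b \<in> S \<Longrightarrow> a \<in> S"
  shows "openin path_topology S"
proof -
  have "S = (\<Union>b\<in>S. cyl b t)"
    using assms cyl_self by blast
  then show ?thesis
    by (metis (no_types, lifting) openin_Union imageE openin_cyl)
qed

lemma admissible_sigma_algebra: "admissible_sigma \<Sigma> \<Longrightarrow> algebra UNIV \<Sigma>"
  by (simp add: admissible_sigma_def sigma_algebra_def)

lemma cyl_in_sigma: "admissible_sigma \<Sigma> \<Longrightarrow> cyl \<omega> t \<in> \<Sigma>"
  by (simp add: admissible_sigma_def openin_cyl)

lemma cyl_saturated_in_sigma:
  "admissible_sigma \<Sigma> \<Longrightarrow> (\<And>a b. a \<in> cyl b t \<Longrightarrow> b \<in> S \<Longrightarrow> a \<in> S) \<Longrightarrow> S \<in> \<Sigma>"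
  unfolding admissible_sigma_def by (blast intro: openin_if_cyl_saturated)

lemma abs_cont_refl: "abs_cont \<Sigma> R R"
  by (simp add: abs_cont_def)

lemma abs_cont_le_mult:
  assumes le: "\<And>E. E \<in> \<Sigma> \<Longrightarrow> 0 \<le> Q' E \<and> Q' E \<le> c * Q E"
    and "abs_cont \<Sigma> Q R"
  shows "abs_cont \<Sigma> Q' R"
  unfolding abs_cont_def
proof (intro allI impI)
  fix En :: "nat \<Rightarrow> _"
  assume En: "\<forall>n. En n \<in> \<Sigma>" and "(\<lambda>n. R (En n)) \<longlonglongrightarrow> 0"
  then have "(\<lambda>n. Q (En n)) \<longlonglongrightarrow> 0"
    using \<open>abs_cont \<Sigma> Q R\<close> by (simp add: abs_cont_def)
  then have upper: "(\<lambda>n. c * Q (En n)) \<longlonglongrightarrow> 0"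
    using tendsto_mult_right_zero by blast
  have "\<forall>\<^sub>F n in sequentially. 0 \<le> Q' (En n)"
    and "\<forall>\<^sub>F n in sequentially. Q' (En n) \<le> c * Q (En n)"
    using le En by auto
  from real_tendsto_sandwich[OF this tendsto_const upper]
  show "(\<lambda>n. Q' (En n)) \<longlonglongrightarrow> 0" .
qed

lemma fa_prob_normalize:
  assumes "algebra UNIV \<Sigma>"
    and nonneg: "\<And>E. E \<in> \<Sigma> \<Longrightarrow> 0 \<le> \<nu> E"
    and add: "\<And>A B. A \<in> \<Sigma> \<Longrightarrow> B \<in> \<Sigma> \<Longrightarrow> A \<inter> B = {} \<Longrightarrow> \<nu> (A \<union> B) = \<nu> A + \<nu> B"
    and pos: "\<nu> UNIV > 0"
  shows "fa_prob \<Sigma> (\<lambda>E. \<nu> E / \<nu> UNIV)"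
proof -
  interpret algebra UNIV \<Sigma> by fact
  have "\<nu> E \<le> \<nu> UNIV" if "E \<in> \<Sigma>" for E
    using add[of E "UNIV - E"] nonneg[of "UNIV - E"] that compl_sets by auto
  then show ?thesis
    using pos by (auto simp: fa_prob_def nonneg add add_divide_distrib)
qed

locale fa_prob_space = algebra "UNIV :: 'a set" \<Sigma> for \<Sigma> :: "'a set set" +
  fixes \<mu> :: "'a set \<Rightarrow> real"
  assumes fa_prob: "fa_prob \<Sigma> \<mu>"
begin

lemma nonneg: "E \<in> \<Sigma> \<Longrightarrow> 0 \<le> \<mu> E"
  using fa_prob by (simp add: fa_prob_def)

lemma prob_UNIV: "\<mu> UNIV = 1"
  using fa_prob by (simp add: fa_prob_def)

lemma additive: "A \<in> \<Sigma> \<Longrightarrow> B \<in> \<Sigma> \<Longrightarrow> A \<inter> B = {} \<Longrightarrow> \<mu> (A \<union> B) = \<mu> A + \<mu> B"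
  using fa_prob by (simp add: fa_prob_def)

lemma additive_Int:
  "A \<in> \<Sigma> \<Longrightarrow> B \<in> \<Sigma> \<Longrightarrow> G \<in> \<Sigma> \<Longrightarrow> A \<inter> B = {} \<Longrightarrow>
    \<mu> ((A \<union> B) \<inter> G) = \<mu> (A \<inter> G) + \<mu> (B \<inter> G)"
  using additive[of "A \<inter> G" "B \<inter> G"] by (auto simp: Int_Un_distrib2)

lemma diff: "A \<in> \<Sigma> \<Longrightarrow> B \<in> \<Sigma> \<Longrightarrow> A \<subseteq> B \<Longrightarrow> \<mu> (B - A) = \<mu> B - \<mu> A"
  using additive[of A "B - A"] by (simp add: Diff Un_absorb1)

lemma mono: "A \<in> \<Sigma> \<Longrightarrow> B \<in> \<Sigma> \<Longrightarrow> A \<subseteq> B \<Longrightarrow> \<mu> A \<le> \<mu> B"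
  using diff nonneg[of "B - A"] by auto

lemma Int_eq_if_prob_one:
  assumes "C \<in> \<Sigma>" "\<mu> C = 1" "G \<in> \<Sigma>"
  shows "\<mu> (G \<inter> C) = \<mu> G"
proof -
  have "\<mu> (G - G \<inter> C) \<le> \<mu> (UNIV - C)"
    using assms by (intro mono) auto
  also have "\<dots> = 0"
    using assms diff[of C UNIV] by (simp add: prob_UNIV)
  finally show ?thesis
    using assms diff[of "G \<inter> C" G] mono[of "G \<inter> C" G] by (auto simp: Int)
qed

lemma fa_prob_cond:
  assumes "G \<in> \<Sigma>" "\<mu> G > 0"
  shows "fa_prob \<Sigma> (\<lambda>E. \<mu> (E \<inter> G) / \<mu> G)"
  using fa_prob_normalize[of \<Sigma> "\<lambda>E. \<mu> (E \<inter> G)"] assms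
  by (simp add: algebra_axioms Int nonneg additive_Int)

end

lemma cond_prob_fa_prob_space:
  "cond_prob \<Sigma> P \<Longrightarrow> algebra UNIV \<Sigma> \<Longrightarrow> fa_prob_space \<Sigma> (\<lambda>E. P E (cyl \<omega> t))"
  by (simp add: cond_prob_def fa_prob_space_def fa_prob_space_axioms_def)

text \<open>Only meaningful for decreasing \<open>C\<close>, where the limit exists; otherwise \<open>lim\<close> is unspecified.\<close>
definition tail_measure :: "('a set \<Rightarrow> real) \<Rightarrow> (nat \<Rightarrow> 'a set) \<Rightarrow> 'a set \<Rightarrow> real" where
  "tail_measure \<mu> C E = lim (\<lambda>s. \<mu> (E \<inter> C s))"

definition tail_prior ::
    "'a set set \<Rightarrow> ('a set \<Rightarrow> real) \<Rightarrow> (nat \<Rightarrow> 'a set) \<Rightarrow> ('a set \<Rightarrow> real) \<Rightarrow> bool" where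
  "tail_prior \<Sigma> \<mu> C Q \<longleftrightarrow> fa_prob \<Sigma> Q \<and> abs_cont \<Sigma> Q \<mu> \<and> (\<forall>t. Q (C t) = 1)"

lemma tail_prior_cond:
  assumes "algebra UNIV \<Sigma>" and C_sets: "\<And>t. C t \<in> \<Sigma>"
    and Q: "tail_prior \<Sigma> \<mu> C Q" and G: "G \<in> \<Sigma>" "Q G > 0"
  shows "tail_prior \<Sigma> \<mu> C (\<lambda>E. Q (E \<inter> G) / Q G)"
proof -
  have fa: "fa_prob \<Sigma> Q" and ac: "abs_cont \<Sigma> Q \<mu>" and full: "\<And>t. Q (C t) = 1"
    using Q by (simp_all add: tail_prior_def)
  interpret fa_prob_space \<Sigma> Q
    using assms(1) fa by (simp add: fa_prob_space_def fa_prob_space_axioms_def)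
  have "0 \<le> Q (E \<inter> G) / Q G \<and> Q (E \<inter> G) / Q G \<le> 1 / Q G * Q E" if "E \<in> \<Sigma>" for E
  proof -
    have "E \<inter> G \<in> \<Sigma>"
      using that G(1) by (rule Int)
    then have "0 \<le> Q (E \<inter> G)" "Q (E \<inter> G) \<le> Q E"
      using that by (auto intro: nonneg mono)
    then show ?thesis
      using G(2) by (simp add: divide_right_mono)
  qed
  then have "abs_cont \<Sigma> (\<lambda>E. Q (E \<inter> G) / Q G) \<mu>"
    using ac by (rule abs_cont_le_mult)
  moreover have "Q (C t \<inter> G) = Q G" for t
    using Int_eq_if_prob_one[OF C_sets full G(1)] by (simp add: Int_commute)
  ultimately show ?thesis
    using fa_prob_cond[OF G] G(2) by (simp add: tail_prior_def)
qed

context fa_prob_space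
begin

context
  fixes C :: "nat \<Rightarrow> 'a set"
  assumes C_sets: "\<And>s. C s \<in> \<Sigma>" and decseq_C: "decseq C"
begin

lemma tendsto_tail_measure:
  assumes E: "E \<in> \<Sigma>"
  shows "(\<lambda>s. \<mu> (E \<inter> C s)) \<longlonglongrightarrow> tail_measure \<mu> C E"
proof -
  have "decseq (\<lambda>s. \<mu> (E \<inter> C s))"
    using E C_sets decseqD[OF decseq_C] by (intro antimonoI mono) (auto simp: Int)
  then obtain l where "(\<lambda>s. \<mu> (E \<inter> C s)) \<longlonglongrightarrow> l"
    using decseq_convergent[of _ 0] nonneg E C_sets by (metis Int)
  then show ?thesis
    by (simp add: tail_measure_def limI)
qed

lemma tendsto_prob_tail: "(\<lambda>s. \<mu> (C s)) \<longlonglongrightarrow> tail_measure \<mu> C UNIV"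
  using tendsto_tail_measure[of UNIV] by simp

lemma tail_measure_nonneg: "E \<in> \<Sigma> \<Longrightarrow> 0 \<le> tail_measure \<mu> C E"
  by (rule LIMSEQ_le_const[OF tendsto_tail_measure]) (auto simp: C_sets Int nonneg)

lemma tail_measure_le: "E \<in> \<Sigma> \<Longrightarrow> tail_measure \<mu> C E \<le> \<mu> E"
  by (rule LIMSEQ_le_const2[OF tendsto_tail_measure]) (auto simp: C_sets Int intro!: mono)

lemma tail_measure_additive:
  assumes "A \<in> \<Sigma>" "B \<in> \<Sigma>" "A \<inter> B = {}"
  shows "tail_measure \<mu> C (A \<union> B) = tail_measure \<mu> C A + tail_measure \<mu> C B"
proof -
  have "(\<lambda>s. \<mu> ((A \<union> B) \<inter> C s)) \<longlonglongrightarrow> tail_measure \<mu> C A + tail_measure \<mu> C B"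
    using tendsto_add[OF tendsto_tail_measure tendsto_tail_measure] assms
    by (simp add: additive_Int C_sets)
  then show ?thesis
    using LIMSEQ_unique tendsto_tail_measure assms by blast
qed

lemma tail_measure_tail_set: "tail_measure \<mu> C (C t) = tail_measure \<mu> C UNIV"
proof -
  have "\<forall>\<^sub>F s in sequentially. \<mu> (C s) = \<mu> (C t \<inter> C s)"
    unfolding eventually_sequentially
    using decseqD[OF decseq_C] by (metis Int_absorb1)
  then have "(\<lambda>s. \<mu> (C t \<inter> C s)) \<longlonglongrightarrow> tail_measure \<mu> C UNIV"
    by (rule Lim_transform_eventually[OF tendsto_prob_tail])
  then show ?thesis
    using LIMSEQ_unique tendsto_tail_measure C_sets by blast
qed

lemma tail_measure_lower_bound:
  assumes G: "G \<in> \<Sigma>" "G \<subseteq> C t"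
  shows "\<mu> G - (\<mu> (C t) - tail_measure \<mu> C UNIV) \<le> tail_measure \<mu> C G"
proof -
  have "decseq (\<lambda>s. \<mu> (C s))"
    by (rule antimonoI) (simp add: mono C_sets decseqD[OF decseq_C])
  have L_le: "tail_measure \<mu> C UNIV \<le> \<mu> (C s)" for s
    using decseq_ge[OF \<open>decseq (\<lambda>s. \<mu> (C s))\<close> tendsto_prob_tail] .
  have "\<mu> G - (\<mu> (C t) - tail_measure \<mu> C UNIV) \<le> \<mu> (G \<inter> C s)" if "t \<le> s" for s
  proof -
    have "C s \<subseteq> C t"
      using decseqD[OF decseq_C that] .
    have GC: "G \<inter> C s \<in> \<Sigma>" "G - G \<inter> C s \<in> \<Sigma>" "C t - C s \<in> \<Sigma>"
      using G C_sets by (simp_all add: Int Diff)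
    have "\<mu> G - \<mu> (G \<inter> C s) = \<mu> (G - G \<inter> C s)"
      using diff[OF GC(1) G(1)] by simp
    also have "\<dots> \<le> \<mu> (C t - C s)"
      using G(2) by (intro mono[OF GC(2,3)]) blast
    also have "\<dots> = \<mu> (C t) - \<mu> (C s)"
      using diff[OF C_sets C_sets \<open>C s \<subseteq> C t\<close>] .
    finally show ?thesis
      using L_le[of s] by linarith
  qed
  then have "\<exists>N. \<forall>s\<ge>N. \<mu> G - (\<mu> (C t) - tail_measure \<mu> C UNIV) \<le> \<mu> (G \<inter> C s)"
    by blast
  then show ?thesis
    by (rule LIMSEQ_le_const[OF tendsto_tail_measure[OF G(1)]])
qed


lemma tail_prior_normalized:
  assumes pos: "tail_measure \<mu> C UNIV > 0"
  shows "tail_prior \<Sigma> \<mu> C (\<lambda>E. tail_measure \<mu> C E / tail_measure \<mu> C UNIV)"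
proof -
  have "fa_prob \<Sigma> (\<lambda>E. tail_measure \<mu> C E / tail_measure \<mu> C UNIV)"
    using fa_prob_normalize[OF algebra_axioms tail_measure_nonneg tail_measure_additive pos] .
  moreover have "abs_cont \<Sigma> (\<lambda>E. tail_measure \<mu> C E / tail_measure \<mu> C UNIV) \<mu>"
  proof (rule abs_cont_le_mult[OF _ abs_cont_refl])
    fix E assume "E \<in> \<Sigma>"
    then show "0 \<le> tail_measure \<mu> C E / tail_measure \<mu> C UNIV \<and>
        tail_measure \<mu> C E / tail_measure \<mu> C UNIV \<le> 1 / tail_measure \<mu> C UNIV * \<mu> E"
      using tail_measure_nonneg tail_measure_le pos by (simp add: divide_right_mono)
  qed
  ultimately show ?thesis
    using tail_measure_tail_set pos by (simp add: tail_prior_def)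
qed

lemma obtain_tail_set_of_intermediate_measure:
  assumes sn: "strongly_nonatomic \<Sigma> \<mu>" and pos: "tail_measure \<mu> C UNIV > 0"
  obtains G where "G \<in> \<Sigma>" "0 < tail_measure \<mu> C G" "tail_measure \<mu> C G < tail_measure \<mu> C UNIV"
proof -
  let ?L = "tail_measure \<mu> C UNIV"
  have "\<forall>\<^sub>F s in sequentially. \<mu> (C s) < 2 * ?L"
    using order_tendstoD(2)[OF tendsto_prob_tail] pos by simp
  then obtain t where t: "\<mu> (C t) < 2 * ?L"
    by (auto simp: eventually_sequentially)
  obtain G where G: "G \<in> \<Sigma>" "G \<subseteq> C t" "\<mu> G = 1/2 * \<mu> (C t)"
    using sn[unfolded strongly_nonatomic_def, rule_format, OF C_sets, of "1/2"] by auto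
  have "tail_measure \<mu> C G < ?L"
    using tail_measure_le[OF G(1)] G(3) t by linarith
  moreover have "0 < tail_measure \<mu> C G"
    using tail_measure_lower_bound[OF G(1,2)] G(3) t by linarith
  ultimately show ?thesis
    using that G(1) by blast
qed

lemma obtain_distinct_tail_priors:
  assumes sn: "strongly_nonatomic \<Sigma> \<mu>" and nz: "\<not> (\<lambda>s. \<mu> (C s)) \<longlonglongrightarrow> 0"
  obtains Q1 Q2 E where "tail_prior \<Sigma> \<mu> C Q1" "tail_prior \<Sigma> \<mu> C Q2" "E \<in> \<Sigma>" "Q1 E \<noteq> Q2 E"
proof -
  let ?L = "tail_measure \<mu> C UNIV"
  have "?L \<noteq> 0"
    using tendsto_prob_tail nz by force
  with tail_measure_nonneg[OF top] have pos: "?L > 0"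
    by simp
  define Q where "Q E = tail_measure \<mu> C E / ?L" for E
  have Q: "tail_prior \<Sigma> \<mu> C Q"
    unfolding Q_def using tail_prior_normalized[OF pos] .
  obtain G where G: "G \<in> \<Sigma>" "0 < tail_measure \<mu> C G" "tail_measure \<mu> C G < ?L"
    using obtain_tail_set_of_intermediate_measure[OF sn pos] by blast
  then have QG: "0 < Q G" "Q G < 1"
    using pos by (simp_all add: Q_def)
  have "tail_prior \<Sigma> \<mu> C (\<lambda>E. Q (E \<inter> G) / Q G)"
    by (rule tail_prior_cond[OF algebra_axioms C_sets Q G(1) QG(1)])
  then show ?thesis
    using that[OF Q _ G(1)] QG by simp
qed

end

end

lemma cond_prob_fa_prob: "cond_prob \<Sigma> P \<Longrightarrow> fa_prob \<Sigma> (\<lambda>E. P E (cyl \<omega> t))"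
  by (simp add: cond_prob_def)

lemma cond_prob_eq_if_cyl_prob_one:
  assumes Q: "cond_prob \<Sigma> Q" and "algebra UNIV \<Sigma>"
    and cyl: "cyl \<omega> t \<in> \<Sigma>" "Q (cyl \<omega> t) UNIV = 1" and E: "E \<in> \<Sigma>"
  shows "Q E (cyl \<omega> t) = Q E UNIV"
proof -
  interpret fa_prob_space \<Sigma> "\<lambda>E. Q E UNIV"
    using cond_prob_fa_prob_space[OF assms(1,2), of \<omega> 0] by simp
  have "Q (E \<inter> cyl \<omega> (0 + t)) (cyl \<omega> 0) = Q E (cyl \<omega> (0 + t)) * Q (cyl \<omega> (0 + t)) (cyl \<omega> 0)"
    using Q E unfolding cond_prob_def by blast
  moreover have "Q (E \<inter> cyl \<omega> t) UNIV = Q E UNIV"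
    by (rule Int_eq_if_prob_one[OF cyl E])
  ultimately show ?thesis
    using cyl(2) by simp
qed

lemma abs_diff_le_SUP:
  assumes p: "fa_prob \<Sigma> p" and q: "fa_prob \<Sigma> q" and "E \<in> \<Sigma>"
  shows "\<bar>p E - q E\<bar> \<le> (SUP F\<in>\<Sigma>. \<bar>p F - q F\<bar>)"
proof (rule cSUP_upper[OF \<open>E \<in> \<Sigma>\<close>], rule bdd_aboveI2)
  fix F assume "F \<in> \<Sigma>"
  then have "0 \<le> p F" "p F \<le> 1" "0 \<le> q F" "q F \<le> 1"
    using p q by (simp_all add: fa_prob_def)
  then show "\<bar>p F - q F\<bar> \<le> 1"
    by linarith
qed

text \<open>The set of paths on which \<open>P\<close> and \<open>Qt\<close> disagree by more than \<open>\<epsilon>\<close> at time \<open>t\<close> is a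
  union of cylinders of length \<open>t\<close>; once its \<open>Qt\<close>-probability drops below
  \<open>Qt(\<omega>^t) = 1\<close> it cannot contain \<omega>.\<close>
lemma merges_close_along_path:
  assumes adm: "admissible_sigma \<Sigma>" and P: "cond_prob \<Sigma> P" and Qt: "cond_prob \<Sigma> Qt"
    and "merges \<Sigma> P Qt" and full: "\<And>t. Qt (cyl \<omega> t) UNIV = 1" and "\<epsilon> > 0"
  shows "\<forall>\<^sub>F t in sequentially. \<forall>E\<in>\<Sigma>. \<bar>P E (cyl \<omega> t) - Qt E UNIV\<bar> \<le> \<epsilon>"
proof -
  have alg: "algebra UNIV \<Sigma>"
    using adm by (rule admissible_sigma_algebra)
  interpret fa_prob_space \<Sigma> "\<lambda>E. Qt E UNIV"
    using cond_prob_fa_prob_space[OF Qt alg, of \<omega> 0] by simp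
  define S where "S t = {\<omega>'. (SUP E\<in>\<Sigma>. \<bar>P E (cyl \<omega>' t) - Qt E (cyl \<omega>' t)\<bar>) > \<epsilon>}" for t
  have S_sets: "S t \<in> \<Sigma>" for t
    by (rule cyl_saturated_in_sigma[OF adm, of t]) (simp add: S_def cyl_eq_if_mem)
  have "(\<lambda>t. Qt (S t) UNIV) \<longlonglongrightarrow> 0"
    using \<open>merges \<Sigma> P Qt\<close> \<open>\<epsilon> > 0\<close> by (simp add: merges_def S_def)
  then have "\<forall>\<^sub>F t in sequentially. Qt (S t) UNIV < 1"
    by (rule order_tendstoD) simp
  then show ?thesis
  proof (rule eventually_mono)
    fix t assume small: "Qt (S t) UNIV < 1"
    have "\<omega> \<notin> S t"
    proof
      assume "\<omega> \<in> S t"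
      then have "cyl \<omega> t \<subseteq> S t"
        by (auto simp: S_def cyl_eq_if_mem)
      then have "Qt (cyl \<omega> t) UNIV \<le> Qt (S t) UNIV"
        by (intro mono cyl_in_sigma[OF adm] S_sets)
      then show False
        using small full[of t] by simp
    qed
    then have sup: "(SUP E\<in>\<Sigma>. \<bar>P E (cyl \<omega> t) - Qt E (cyl \<omega> t)\<bar>) \<le> \<epsilon>"
      by (simp add: S_def)
    show "\<forall>E\<in>\<Sigma>. \<bar>P E (cyl \<omega> t) - Qt E UNIV\<bar> \<le> \<epsilon>"
    proof
      fix E assume E: "E \<in> \<Sigma>"
      have "\<bar>P E (cyl \<omega> t) - Qt E (cyl \<omega> t)\<bar> \<le> \<epsilon>"
        using abs_diff_le_SUP[OF cond_prob_fa_prob[OF P, of \<omega> t] cond_prob_fa_prob[OF Qt, of \<omega> t] E] sup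
        by linarith
      then show "\<bar>P E (cyl \<omega> t) - Qt E UNIV\<bar> \<le> \<epsilon>"
        using cond_prob_eq_if_cyl_prob_one[OF Qt alg cyl_in_sigma[OF adm] full E] by simp
    qed
  qed
qed

lemma blackwell_dubins_close_to_tail_prior:
  assumes adm: "admissible_sigma \<Sigma>" and P: "cond_prob \<Sigma> P" and bd: "blackwell_dubins \<Sigma> P"
    and Q: "tail_prior \<Sigma> (\<lambda>E. P E UNIV) (cyl \<omega>) Q" and "\<epsilon> > 0"
  shows "\<forall>\<^sub>F t in sequentially. \<forall>E\<in>\<Sigma>. \<bar>P E (cyl \<omega> t) - Q E\<bar> \<le> \<epsilon>"
proof -
  obtain Qt where Qt: "cond_prob \<Sigma> Qt" "\<forall>E\<in>\<Sigma>. Qt E UNIV = Q E" "merges \<Sigma> P Qt"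
    using bd Q unfolding blackwell_dubins_def tail_prior_def by blast
  have "Qt (cyl \<omega> t) UNIV = 1" for t
    using Qt(2) Q cyl_in_sigma[OF adm] by (simp add: tail_prior_def)
  from merges_close_along_path[OF adm P Qt(1,3) this \<open>\<epsilon> > 0\<close>] show ?thesis
    by (rule eventually_mono) (simp add: Qt(2))
qed

lemma blackwell_dubins_tail_prior_unique:
  assumes adm: "admissible_sigma \<Sigma>" and P: "cond_prob \<Sigma> P" and bd: "blackwell_dubins \<Sigma> P"
    and Q1: "tail_prior \<Sigma> (\<lambda>E. P E UNIV) (cyl \<omega>) Q1"
    and Q2: "tail_prior \<Sigma> (\<lambda>E. P E UNIV) (cyl \<omega>) Q2" and E: "E \<in> \<Sigma>"
  shows "Q1 E = Q2 E"
proof -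
  have bound: "\<bar>Q1 E - Q2 E\<bar> \<le> 2 * \<epsilon>" if "\<epsilon> > 0" for \<epsilon>
  proof -
    have "\<forall>\<^sub>F t in sequentially. \<bar>P E (cyl \<omega> t) - Q1 E\<bar> \<le> \<epsilon> \<and> \<bar>P E (cyl \<omega> t) - Q2 E\<bar> \<le> \<epsilon>"
      using eventually_conj[OF blackwell_dubins_close_to_tail_prior[OF adm P bd Q1 that]
          blackwell_dubins_close_to_tail_prior[OF adm P bd Q2 that]]
      by (rule eventually_mono) (use E in blast)
    then obtain t where "\<bar>P E (cyl \<omega> t) - Q1 E\<bar> \<le> \<epsilon>" "\<bar>P E (cyl \<omega> t) - Q2 E\<bar> \<le> \<epsilon>"
      by (auto simp: eventually_sequentially)
    then show ?thesis
      by linarith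
  qed
  show ?thesis
  proof (rule ccontr)
    assume "Q1 E \<noteq> Q2 E"
    then show False
      using bound[of "\<bar>Q1 E - Q2 E\<bar> / 4"] by simp
  qed
qed

theorem mainTheorem13:
  fixes \<Sigma> :: "(nat \<Rightarrow> 'x::countable) set set"
    and P :: "(nat \<Rightarrow> 'x) set \<Rightarrow> (nat \<Rightarrow> 'x) set \<Rightarrow> real"
    and \<omega> :: "nat \<Rightarrow> 'x"
  assumes "admissible_sigma \<Sigma>"
    and "P \<in> Delta_BD \<Sigma>"
  shows "(\<lambda>t. P (cyl \<omega> t) UNIV) \<longlonglongrightarrow> 0"
proof (rule ccontr)
  assume nz: "\<not> (\<lambda>t. P (cyl \<omega> t) UNIV) \<longlonglongrightarrow> 0"
  have P: "cond_prob \<Sigma> P" and sn: "strongly_nonatomic \<Sigma> (\<lambda>E. P E UNIV)"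
    and bd: "blackwell_dubins \<Sigma> P"
    using assms(2) by (auto simp: Delta_BD_def cond_opinion_def)
  interpret fa_prob_space \<Sigma> "\<lambda>E. P E UNIV"
    using cond_prob_fa_prob_space[OF P admissible_sigma_algebra[OF assms(1)], of \<omega> 0] by simp
  obtain Q1 Q2 E where "tail_prior \<Sigma> (\<lambda>E. P E UNIV) (cyl \<omega>) Q1"
    "tail_prior \<Sigma> (\<lambda>E. P E UNIV) (cyl \<omega>) Q2" "E \<in> \<Sigma>" "Q1 E \<noteq> Q2 E"
    using obtain_distinct_tail_priors[OF cyl_in_sigma[OF assms(1)] decseq_cyl sn nz] by blast
  then show False
    using blackwell_dubins_tail_prior_unique[OF assms(1) P bd] by blast
qed

end
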